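(* Let $\lambda\in P$, $\lhd\in\mathrm{RO}(\lambda,\Delta^+)$ and $w\in W$. For every $A\in\mathcal{A}(w,\Gamma)$ one has $\mathrm{wt}(A)=\mathrm{wt}(\Xi(A))$.
   Context: Let $\mathfrak{g}$ be a finite-dimensional complex simple Lie algebra with root system $\Delta$, positive roots $\Delta^+$, Weyl group $W$ with length function $\ell$ and reflections $s_\alpha$, weight lattice $P$, $\mathfrak{h}^*_{\mathbb{R}}=P\otimes_{\mathbb{Z}}\mathbb{R}$, pairing $\langle\cdot,\cdot\rangle$, $\alpha^\vee$ the coroot of $\alpha$, $\rho=\frac12\sum_{\alpha\in\Delta^+}\alpha$. For $\alpha\in\Delta$, $\operatorname{sgn}(\alpha)=\pm1$ according as $\alpha\in\pm\Delta^+$, and $|\alpha|=\operatorname{sgn}(\alpha)\alpha$. For $\alpha\in\Delta$, $k\in\mathbb{Z}$, the affine reflection $s_{\alpha,k}$ of $\mathfrak{h}^*_{\mathbb{R}}$ is $s_{\alpha,k}(\nu)=\nu-(\langle\nu,\alpha^\vee\rangle-k)\alpha$. For $\lambda\in P$, $\Delta^+(\lambda)_{>0}$, $\Delta^+(\lambda)_{=0}$, $\Delta^+(\lambda)_{<0}$ are the sets of $\alpha\in\Delta^+$ with $\langle\lambda,\alpha^\vee\rangle>0$, $=0$, $<0$. Quantum Bruhat graph $\mathrm{QBG}(W)$: vertices $W$; an edge $x\xrightarrow{\alpha}y$ ($\alpha\in\Delta^+$) whenever $y=xs_\alpha$ and either $\ell(y)=\ell(x)+1$ (Bruhat edge) or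 $\ell(y)=\ell(x)-2\langle\rho,\alpha^\vee\rangle+1$ (quantum edge). Reflection orders: a total order $\lhd$ on $\Delta^+$ is a reflection order if whenever $\alpha,\beta,\alpha+\beta\in\Delta^+$, either $\alpha\lhd\alpha+\beta\lhd\beta$ or $\beta\lhd\alpha+\beta\lhd\alpha$; $\mathrm{RO}(\lambda,\Delta^+)$ is the set of those with $\alpha\lhd\beta\lhd\gamma$ for $\alpha\in\Delta^+(\lambda)_{<0}$, $\beta\in\Delta^+(\lambda)_{=0}$, $\gamma\in\Delta^+(\lambda)_{>0}$. Fix such $\lhd$. Interpolated QLS paths: for $x,y\in W$, $\sigma\in\mathbb{Q}$, write $x\overset{(\lambda,+)}{\Longrightarrow}_\sigma y$ if there is a directed path $x=x_0\xrightarrow{\gamma_1}x_1\to\cdots\xrightarrow{\gamma_r}x_r=y$ in $\mathrm{QBG}(W)$ ($r\ge0$) with all $\gamma_k\in\Delta^+(\lambda)_{>0}$, $\gamma_{k+1}\lhd\gamma_k$ for all $k$, and $\sigma\langle\lambda,\gamma_k^\vee\rangle\in\mathbb{Z}$ for all $k$; $x\overset{(\lambda,-)}{\Longrightarrow}_\sigma y$ is defined identically with $\Delta^+(\lambda)_{<0}$ in place of $\Delta^+(\lambda)_{>0}$. An interpolated QLS path of shape $\lambda$ is a triple $\eta=(x_1,\dots,x_s;y_1,\dots,y_{s-1};\sigma_0,\dots,\sigma_s)$ ($s\ge1$) with $x_i,y_i\in W$, $x_i\ne x_{i+1}$, $y_i\ne y_{i+1}$, $\sigma_i\in\mathbb{Q}$,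 $0=\sigma_0<\sigma_1<\dots<\sigma_s=1$, and for $1\le i\le s-1$: $x_{i+1}\overset{(\lambda,-)}{\Longrightarrow}_{\sigma_i}y_i$ and $y_i\overset{(\lambda,+)}{\Longrightarrow}_{\sigma_i}x_i$. $\mathrm{IQLS}(\lambda)$ is the set of these; its weight is $\mathrm{wt}(\eta):=\sum_{k=1}^s(\sigma_k-\sigma_{k-1})x_k\lambda$. Affine data: real affine coroots $\gamma^\vee+k\tilde\delta$ ($\gamma\in\Delta$, $k\in\mathbb{Z}$, $\tilde\delta$ formal); for $\beta^\vee=\gamma^\vee+k\tilde\delta$ put $\overline{\beta^\vee}=\gamma^\vee$, $\overline\beta=\gamma$, $\deg(\beta^\vee)=k$; it is positive if $k>0$ or ($k=0$, $\gamma\in\Delta^+$), negative otherwise; $t_\lambda(\gamma^\vee+k\tilde\delta)=\gamma^\vee+(k-\langle\lambda,\gamma^\vee\rangle)\tilde\delta$; $\mathrm{Inv}(\lambda)$ is the set of positive real affine coroots $\beta^\vee$ with $t_\lambda(\beta^\vee)$ negative (for these, $\langle\lambda,\overline{\beta^\vee}\rangle>0$ and $\overline\beta\in\Delta^+(\lambda)_{>0}\sqcup(-\Delta^+(\lambda)_{<0})$); put $d(\beta^\vee)=\deg(\beta^\vee)/\langle\lambda,\overline{\beta^\vee}\rangle$. Order $\prec$ on $\Delta^+(\lambda)_{>0}\sqcup(-\Delta^+(\lambda)_{<0})$: elements of $\Delta^+(\lambda)_{>0}$ precede those of $-\Delta^+(\lambda)_{<0}$; $\gamma\prec\gamma'$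 iff $\gamma\lhd\gamma'$ on $\Delta^+(\lambda)_{>0}$; $-\alpha\prec-\alpha'$ iff $\alpha\lhd\alpha'$ on $-\Delta^+(\lambda)_{<0}$. Order $<$ on $\mathrm{Inv}(\lambda)$: $\beta^\vee<\beta'^\vee$ iff $d(\beta^\vee)<d(\beta'^\vee)$, or they are equal and $\overline{\beta'}\prec\overline\beta$. Write $\mathrm{Inv}(\lambda)=\{\beta_1^\vee<\dots<\beta_r^\vee\}$, $\gamma_k:=\overline{\beta_k}$, $d_k:=d(\beta_k^\vee)$, $l_k:=\deg(\beta_k^\vee)$, and $\Gamma:=(\gamma_1,\dots,\gamma_r)$. Admissible subsets: for $w\in W$, $\mathcal{A}(w,\Gamma)$ is the set of $A=\{j_1<\dots<j_p\}\subseteq\{1,\dots,r\}$ such that $w=u_0\xrightarrow{|\gamma_{j_1}|}u_1\to\cdots\xrightarrow{|\gamma_{j_p}|}u_p$ is a directed path in $\mathrm{QBG}(W)$, where $u_a:=ws_{|\gamma_{j_1}|}\cdots s_{|\gamma_{j_a}|}$; its weight is $\mathrm{wt}(A):=-w\,s_{\gamma_{j_1},-l_{j_1}}\cdots s_{\gamma_{j_p},-l_{j_p}}(-\lambda)$. One has $0\le d_{j_1}\le\dots\le d_{j_p}\le1$. The map $\Xi$: let $0<c_1<\dots<c_{t-1}<1$ ($t\ge1$) be the distinct values among $d_{j_1},\dots,d_{j_p}$ lying strictly between $0$ and $1$; put $c_0:=0$, $c_t:=1$. For $1\le a\le t$ let $m_a:=\#\{b\mid d_{j_b}<c_a\}$;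 for $1\le a\le t-1$ let $n_a:=m_a+\#\{b\mid m_a<b\le m_{a+1},\ \gamma_{j_b}\in-\Delta^+\}$. Then $\Xi(A):=(x_1,\dots,x_t;y_1,\dots,y_{t-1};\sigma_0,\dots,\sigma_t)$ with $x_i:=u_{m_{t+1-i}}$, $y_i:=u_{n_{t-i}}$, $\sigma_i:=1-c_{t-i}$; this lies in $\mathrm{IQLS}(\lambda)$. *)

theory Defs
  imports "HOL-Analysis.Analysis"
begin

text \<open>The real form h*_R is modelled by a Euclidean space 'a whose inner product
  is W-invariant; roots are vectors of 'a.\<close>

definition coroot_pair :: "'a::real_inner \<Rightarrow> 'a \<Rightarrow> real" where
  "coroot_pair \<nu> \<alpha> = 2 * inner \<nu> \<alpha> / inner \<alpha> \<alpha>"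

definition refl :: "'a::real_inner \<Rightarrow> 'a \<Rightarrow> 'a" where
  "refl \<alpha> \<nu> = \<nu> - coroot_pair \<nu> \<alpha> *\<^sub>R \<alpha>"

definition aff_refl :: "'a::real_inner \<Rightarrow> int \<Rightarrow> 'a \<Rightarrow> 'a" where
  "aff_refl \<alpha> k \<nu> = \<nu> - (coroot_pair \<nu> \<alpha> - of_int k) *\<^sub>R \<alpha>"

definition root_system :: "'a::euclidean_space set \<Rightarrow> bool" where
  "root_system \<Delta> \<longleftrightarrow> finite \<Delta> \<and> 0 \<notin> \<Delta> \<and> span \<Delta> = UNIV
     \<and> (\<forall>\<alpha>\<in>\<Delta>. refl \<alpha> ` \<Delta> \<subseteq> \<Delta>)
     \<and> (\<forall>\<alpha>\<in>\<Delta>. \<forall>\<beta>\<in>\<Delta>. coroot_pair \<beta> \<alpha> \<in> \<int>)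
     \<and> (\<forall>\<alpha>\<in>\<Delta>. \<forall>c. c *\<^sub>R \<alpha> \<in> \<Delta> \<longrightarrow> c = 1 \<or> c = -1)"

definition irreducible_rs :: "'a::real_inner set \<Rightarrow> bool" where
  "irreducible_rs \<Delta> \<longleftrightarrow> \<Delta> \<noteq> {} \<and>
     \<not> (\<exists>A B. A \<noteq> {} \<and> B \<noteq> {} \<and> A \<union> B = \<Delta> \<and> A \<inter> B = {}
            \<and> (\<forall>a\<in>A. \<forall>b\<in>B. inner a b = 0))"

definition positive_system :: "'a::real_inner set \<Rightarrow> 'a set \<Rightarrow> bool" where
  "positive_system \<Delta> \<Delta>p \<longleftrightarrow>
     (\<exists>f. (\<forall>\<alpha>\<in>\<Delta>. inner f \<alpha> \<noteq> 0) \<and> \<Delta>p = {\<alpha>\<in>\<Delta>. inner f \<alpha> > 0})"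

inductive_set weyl_group :: "'a::real_inner set \<Rightarrow> ('a \<Rightarrow> 'a) set" for \<Delta> where
  id_in: "id \<in> weyl_group \<Delta>"
| refl_in: "w \<in> weyl_group \<Delta> \<Longrightarrow> \<alpha> \<in> \<Delta> \<Longrightarrow> w \<circ> refl \<alpha> \<in> weyl_group \<Delta>"

definition simple_roots :: "'a::real_inner set \<Rightarrow> 'a set" where
  "simple_roots \<Delta>p = {\<alpha>\<in>\<Delta>p. \<not> (\<exists>\<beta>\<in>\<Delta>p. \<exists>\<gamma>\<in>\<Delta>p. \<alpha> = \<beta> + \<gamma>)}"

definition weyl_length :: "'a::real_inner set \<Rightarrow> ('a \<Rightarrow> 'a) \<Rightarrow> nat" where
  "weyl_length \<Delta>p w = (LEAST n. \<exists>als. length als = n \<and> set als \<subseteq> simple_roots \<Delta>p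
        \<and> w = foldr (\<lambda>\<alpha> f. refl \<alpha> \<circ> f) als id)"

definition rho :: "'a::real_inner set \<Rightarrow> 'a" where
  "rho \<Delta>p = (1/2) *\<^sub>R (\<Sum>\<alpha>\<in>\<Delta>p. \<alpha>)"

definition qbg_edge :: "'a::real_inner set \<Rightarrow> ('a \<Rightarrow> 'a) \<Rightarrow> 'a \<Rightarrow> ('a \<Rightarrow> 'a) \<Rightarrow> bool" where
  "qbg_edge \<Delta>p x \<alpha> y \<longleftrightarrow> \<alpha> \<in> \<Delta>p \<and> y = x \<circ> refl \<alpha> \<and>
     (real (weyl_length \<Delta>p y) = real (weyl_length \<Delta>p x) + 1 \<or>
      real (weyl_length \<Delta>p y) = real (weyl_length \<Delta>p x) - 2 * coroot_pair (rho \<Delta>p) \<alpha> + 1)"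

definition weight_lattice :: "'a::real_inner set \<Rightarrow> 'a set" where
  "weight_lattice \<Delta> = {\<mu>. \<forall>\<alpha>\<in>\<Delta>. coroot_pair \<mu> \<alpha> \<in> \<int>}"

definition pos_part :: "'a::real_inner set \<Rightarrow> 'a \<Rightarrow> 'a set" where
  "pos_part \<Delta>p \<mu> = {\<alpha>\<in>\<Delta>p. coroot_pair \<mu> \<alpha> > 0}"
definition zero_part :: "'a::real_inner set \<Rightarrow> 'a \<Rightarrow> 'a set" where
  "zero_part \<Delta>p \<mu> = {\<alpha>\<in>\<Delta>p. coroot_pair \<mu> \<alpha> = 0}"
definition neg_part :: "'a::real_inner set \<Rightarrow> 'a \<Rightarrow> 'a set" where
  "neg_part \<Delta>p \<mu> = {\<alpha>\<in>\<Delta>p. coroot_pair \<mu> \<alpha> < 0}"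

text \<open>A reflection order: a strict total order R on the positive roots (R a b means a \<lhd> b).\<close>
definition reflection_order :: "'a::real_inner set \<Rightarrow> ('a \<Rightarrow> 'a \<Rightarrow> bool) \<Rightarrow> bool" where
  "reflection_order \<Delta>p R \<longleftrightarrow>
     (\<forall>\<alpha>\<in>\<Delta>p. \<not> R \<alpha> \<alpha>) \<and>
     (\<forall>\<alpha>\<in>\<Delta>p. \<forall>\<beta>\<in>\<Delta>p. \<forall>\<gamma>\<in>\<Delta>p. R \<alpha> \<beta> \<longrightarrow> R \<beta> \<gamma> \<longrightarrow> R \<alpha> \<gamma>) \<and>
     (\<forall>\<alpha>\<in>\<Delta>p. \<forall>\<beta>\<in>\<Delta>p. \<alpha> \<noteq> \<beta> \<longrightarrow> R \<alpha> \<beta> \<or> R \<beta> \<alpha>) \<and>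
     (\<forall>\<alpha>\<in>\<Delta>p. \<forall>\<beta>\<in>\<Delta>p. \<alpha> + \<beta> \<in> \<Delta>p \<longrightarrow>
        (R \<alpha> (\<alpha> + \<beta>) \<and> R (\<alpha> + \<beta>) \<beta>) \<or> (R \<beta> (\<alpha> + \<beta>) \<and> R (\<alpha> + \<beta>) \<alpha>))"

definition RO :: "'a::real_inner \<Rightarrow> 'a set \<Rightarrow> ('a \<Rightarrow> 'a \<Rightarrow> bool) set" where
  "RO \<mu> \<Delta>p = {R. reflection_order \<Delta>p R \<and>
     (\<forall>\<alpha>\<in>neg_part \<Delta>p \<mu>. \<forall>\<beta>\<in>zero_part \<Delta>p \<mu>. R \<alpha> \<beta>) \<and>
     (\<forall>\<beta>\<in>zero_part \<Delta>p \<mu>. \<forall>\<gamma>\<in>pos_part \<Delta>p \<mu>. R \<beta> \<gamma>) \<and>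
     (\<forall>\<alpha>\<in>neg_part \<Delta>p \<mu>. \<forall>\<gamma>\<in>pos_part \<Delta>p \<mu>. R \<alpha> \<gamma>)}"

text \<open>A real affine coroot gamma^vee + k delta is represented by the pair (gamma, k).
  Positivity of gamma^vee + k delta (degree given as a real number).\<close>
definition aff_pos :: "'a set \<Rightarrow> 'a \<Rightarrow> real \<Rightarrow> bool" where
  "aff_pos \<Delta>p \<gamma> k \<longleftrightarrow> k > 0 \<or> (k = 0 \<and> \<gamma> \<in> \<Delta>p)"

text \<open>Inv(lambda): positive beta with t_lambda(beta) negative;
  t_lambda(gamma^vee + k delta) = gamma^vee + (k - <lambda,gamma^vee>) delta.\<close>
definition Inv :: "'a::real_inner set \<Rightarrow> 'a set \<Rightarrow> 'a \<Rightarrow> ('a \<times> int) set" where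
  "Inv \<Delta> \<Delta>p \<mu> = {(\<gamma>, k). \<gamma> \<in> \<Delta> \<and> aff_pos \<Delta>p \<gamma> (of_int k)
       \<and> \<not> aff_pos \<Delta>p \<gamma> (of_int k - coroot_pair \<mu> \<gamma>)}"

definition dval :: "'a::real_inner \<Rightarrow> 'a \<times> int \<Rightarrow> real" where
  "dval \<mu> b = of_int (snd b) / coroot_pair \<mu> (fst b)"

definition prec :: "'a::real_inner set \<Rightarrow> ('a \<Rightarrow> 'a \<Rightarrow> bool) \<Rightarrow> 'a \<Rightarrow> 'a \<Rightarrow> bool" where
  "prec \<Delta>p R \<gamma> \<gamma>' \<longleftrightarrow> (\<gamma> \<in> \<Delta>p \<and> \<gamma>' \<notin> \<Delta>p) \<or> (\<gamma> \<in> \<Delta>p \<and> \<gamma>' \<in> \<Delta>p \<and> R \<gamma> \<gamma>')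
      \<or> (\<gamma> \<notin> \<Delta>p \<and> \<gamma>' \<notin> \<Delta>p \<and> R (-\<gamma>) (-\<gamma>'))"

definition inv_less :: "'a::real_inner set \<Rightarrow> ('a \<Rightarrow> 'a \<Rightarrow> bool) \<Rightarrow> 'a \<Rightarrow> 'a \<times> int \<Rightarrow> 'a \<times> int \<Rightarrow> bool" where
  "inv_less \<Delta>p R \<mu> b b' \<longleftrightarrow> dval \<mu> b < dval \<mu> b' \<or>
     (dval \<mu> b = dval \<mu> b' \<and> prec \<Delta>p R (fst b') (fst b))"

text \<open>Inv(lambda) = {beta_1 < ... < beta_r} as a list; gamma_k = fst, l_k = snd.\<close>
definition inv_list :: "'a::real_inner set \<Rightarrow> 'a set \<Rightarrow> ('a \<Rightarrow> 'a \<Rightarrow> bool) \<Rightarrow> 'a \<Rightarrow> ('a \<times> int) list" where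
  "inv_list \<Delta> \<Delta>p R \<mu> = (THE L. distinct L \<and> set L = Inv \<Delta> \<Delta>p \<mu> \<and> sorted_wrt (inv_less \<Delta>p R \<mu>) L)"

definition absr :: "'a::real_inner set \<Rightarrow> 'a \<Rightarrow> 'a" where
  "absr \<Delta>p \<gamma> = (if \<gamma> \<in> \<Delta>p then \<gamma> else - \<gamma>)"

text \<open>u_a = w s_{|gamma_{j_1}|} ... s_{|gamma_{j_a}|}, indices of Gamma are 1-based\<close>
definition u_seq :: "'a::real_inner set \<Rightarrow> ('a \<times> int) list \<Rightarrow> ('a \<Rightarrow> 'a) \<Rightarrow> nat list \<Rightarrow> nat \<Rightarrow> 'a \<Rightarrow> 'a" where
  "u_seq \<Delta>p L w js a = w \<circ> foldr (\<lambda>j f. refl (absr \<Delta>p (fst (L ! (j - 1)))) \<circ> f) (take a js) id"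

definition admissible :: "'a::euclidean_space set \<Rightarrow> 'a set \<Rightarrow> ('a \<Rightarrow> 'a \<Rightarrow> bool) \<Rightarrow> 'a
     \<Rightarrow> ('a \<Rightarrow> 'a) \<Rightarrow> nat set set" where
  "admissible \<Delta> \<Delta>p R \<mu> w =
    {A. let L = inv_list \<Delta> \<Delta>p R \<mu>; js = sorted_list_of_set A in
        A \<subseteq> {1..length L} \<and>
        (\<forall>a < length js. qbg_edge \<Delta>p (u_seq \<Delta>p L w js a)
             (absr \<Delta>p (fst (L ! (js ! a - 1)))) (u_seq \<Delta>p L w js (Suc a)))}"

definition wt_adm :: "'a::euclidean_space set \<Rightarrow> 'a set \<Rightarrow> ('a \<Rightarrow> 'a \<Rightarrow> bool) \<Rightarrow> 'a
     \<Rightarrow> ('a \<Rightarrow> 'a) \<Rightarrow> nat set \<Rightarrow> 'a" where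
  "wt_adm \<Delta> \<Delta>p R \<mu> w A =
    (let L = inv_list \<Delta> \<Delta>p R \<mu>; js = sorted_list_of_set A in
      - w (foldr (\<lambda>j f. aff_refl (fst (L ! (j - 1))) (- snd (L ! (j - 1))) \<circ> f) js id (- \<mu>)))"

text \<open>The map Xi, producing (x_1..x_t; y_1..y_{t-1}; sigma_0..sigma_t) as three lists.\<close>
definition Xi :: "'a::euclidean_space set \<Rightarrow> 'a set \<Rightarrow> ('a \<Rightarrow> 'a \<Rightarrow> bool) \<Rightarrow> 'a
     \<Rightarrow> ('a \<Rightarrow> 'a) \<Rightarrow> nat set \<Rightarrow> ('a \<Rightarrow> 'a) list \<times> ('a \<Rightarrow> 'a) list \<times> real list" where
  "Xi \<Delta> \<Delta>p R \<mu> w A =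
    (let L = inv_list \<Delta> \<Delta>p R \<mu>;
         js = sorted_list_of_set A;
         p = length js;
         u = u_seq \<Delta>p L w js;
         dj = (\<lambda>b. dval \<mu> (L ! (js ! (b - 1) - 1)));
         gj = (\<lambda>b. fst (L ! (js ! (b - 1) - 1)));
         cs = sorted_list_of_set {dj b | b. b \<in> {1..p} \<and> 0 < dj b \<and> dj b < 1};
         t = length cs + 1;
         c = (\<lambda>a. if a = 0 then 0 else if a = t then 1 else cs ! (a - 1));
         m = (\<lambda>a. card {b \<in> {1..p}. dj b < c a});
         n = (\<lambda>a. m a + card {b. m a < b \<and> b \<le> m (Suc a) \<and> gj b \<notin> \<Delta>p})
     in (map (\<lambda>i. u (m (t + 1 - i))) [1..<t + 1],
         map (\<lambda>i. u (n (t - i))) [1..<t],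
         map (\<lambda>i. 1 - c (t - i)) [0..<t + 1]))"

definition wt_path :: "'a::real_vector \<Rightarrow> ('a \<Rightarrow> 'a) list \<times> ('a \<Rightarrow> 'a) list \<times> real list \<Rightarrow> 'a" where
  "wt_path \<mu> \<eta> = (case \<eta> of (xs, ys, \<sigma>s) \<Rightarrow>
     (\<Sum>k = 1..length xs. (\<sigma>s ! k - \<sigma>s ! (k - 1)) *\<^sub>R (xs ! (k - 1)) \<mu>))"

end

theory Submission
  imports Defs
begin

text \<open>Writing each affine reflection as \<open>s_{\<gamma>,-l} \<nu> = s_\<gamma> \<nu> - l \<gamma>\<close> and using
  \<open>u_{i-1} \<lambda> - u_i \<lambda> = \<langle>\<lambda>, \<gamma>\<^sup>\<or>\<rangle> u_{i-1} \<gamma>\<close>, the weight of \<open>A\<close> becomes the Abel sum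
  \<open>V_p + \<Sum>_i d_i (V_{i-1} - V_i)\<close> with \<open>V_i = u_i \<lambda>\<close>. The order on \<open>Inv(\<lambda>)\<close> makes the
  \<open>d_i\<close> a non-decreasing sequence in \<open>[0, 1]\<close>, so grouping the indices by the distinct values
  \<open>0 = c_0 < \<dots> < c_t = 1\<close> and telescoping turns this sum into
  \<open>\<Sum>_a (c_a - c_{a-1}) V_{m_a}\<close>, which is the weight of \<open>\<Xi>(A)\<close> read backwards.\<close>

section \<open>Products of reflections\<close>

lemma linear_refl: "linear (refl \<alpha>)"
  unfolding refl_def coroot_pair_def
  by (rule linearI) (auto simp: inner_add_left algebra_simps add_divide_distrib)

lemma weyl_group_linear: "w \<in> weyl_group \<Delta> \<Longrightarrow> linear w"
  by (induction rule: weyl_group.induct) (use linear_id linear_compose linear_refl in blast)+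

lemma refl_uminus: "refl (- \<alpha>) = refl \<alpha>"
  unfolding refl_def coroot_pair_def by (simp add: fun_eq_iff)

lemma refl_absr: "refl (absr \<Delta>p \<gamma>) = refl \<gamma>"
  unfolding absr_def by (simp add: refl_uminus)

lemma refl_self: "\<alpha> \<noteq> 0 \<Longrightarrow> refl \<alpha> \<alpha> = - \<alpha>"
  unfolding refl_def coroot_pair_def by (simp add: algebra_simps scaleR_2)

lemma aff_refl_eq_refl_plus: "aff_refl \<alpha> k \<nu> = refl \<alpha> \<nu> + of_int k *\<^sub>R \<alpha>"
  unfolding aff_refl_def refl_def by (simp add: algebra_simps)

definition refl_prod :: "(nat \<Rightarrow> 'a::real_inner) \<Rightarrow> nat list \<Rightarrow> 'a \<Rightarrow> 'a" where
  "refl_prod g js = foldr (\<lambda>j f. refl (g j) \<circ> f) js id"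

definition aff_refl_prod :: "(nat \<Rightarrow> 'a::real_inner) \<Rightarrow> (nat \<Rightarrow> int) \<Rightarrow> nat list \<Rightarrow> 'a \<Rightarrow> 'a" where
  "aff_refl_prod g k js = foldr (\<lambda>j f. aff_refl (g j) (k j) \<circ> f) js id"

lemma refl_prod_Nil [simp]: "refl_prod g [] x = x"
  by (simp add: refl_prod_def)

lemma refl_prod_Cons [simp]: "refl_prod g (j # js) x = refl (g j) (refl_prod g js x)"
  by (simp add: refl_prod_def)

lemma aff_refl_prod_Nil [simp]: "aff_refl_prod g k [] x = x"
  by (simp add: aff_refl_prod_def)

lemma aff_refl_prod_Cons [simp]:
  "aff_refl_prod g k (j # js) x = aff_refl (g j) (k j) (aff_refl_prod g k js x)"
  by (simp add: aff_refl_prod_def)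

lemma refl_prod_append: "refl_prod g (xs @ ys) x = refl_prod g xs (refl_prod g ys x)"
  by (induction xs) auto

lemma linear_refl_prod: "linear (refl_prod g js)"
proof (induction js)
  case Nil
  show ?case by (simp add: refl_prod_def linear_ident)
next
  case (Cons j js)
  have "refl_prod g (j # js) = refl (g j) \<circ> refl_prod g js"
    by (simp add: fun_eq_iff)
  then show ?case
    using Cons linear_refl linear_compose by metis
qed

lemma aff_refl_prod_eq:
  "aff_refl_prod g k js x = refl_prod g js x +
     (\<Sum>i<length js. of_int (k (js ! i)) *\<^sub>R refl_prod g (take i js) (g (js ! i)))"
proof (induction js)
  case Nil
  show ?case by simp
next
  case (Cons j js)
  interpret linear "refl (g j)" by (rule linear_refl)
  show ?case
    by (simp add: Cons aff_refl_eq_refl_plus add scale sum sum.lessThan_Suc_shift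
        del: sum.lessThan_Suc)
qed

lemma aff_refl_prod_as_abel_sum:
  fixes w :: "'a::real_inner \<Rightarrow> 'a" and g :: "nat \<Rightarrow> 'a" and \<mu> :: 'a and js :: "nat list"
  assumes "linear w" and "\<And>i. i < length js \<Longrightarrow> coroot_pair \<mu> (g (js ! i)) \<noteq> 0"
  defines "V \<equiv> \<lambda>q. w (refl_prod g (take q js) \<mu>)"
  shows "- w (aff_refl_prod g (\<lambda>j. - l j) js (- \<mu>))
    = V (length js) + (\<Sum>i<length js.
        (of_int (l (js ! i)) / coroot_pair \<mu> (g (js ! i))) *\<^sub>R (V i - V (Suc i)))"
proof -
  interpret w: linear w by fact
  interpret r: linear "refl_prod g js" by (rule linear_refl_prod)
  have step: "V i - V (Suc i) = coroot_pair \<mu> (g (js ! i)) *\<^sub>R w (refl_prod g (take i js) (g (js ! i)))"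
    if "i < length js" for i
  proof -
    interpret r': linear "refl_prod g (take i js)" by (rule linear_refl_prod)
    have "V (Suc i) = w (refl_prod g (take i js) (refl (g (js ! i)) \<mu>))"
      using that by (simp add: V_def take_Suc_conv_app_nth refl_prod_append)
    then show ?thesis
      by (simp add: V_def refl_def r'.diff r'.scale w.diff w.scale)
  qed
  have "of_int (l (js ! i)) *\<^sub>R w (refl_prod g (take i js) (g (js ! i)))
      = (of_int (l (js ! i)) / coroot_pair \<mu> (g (js ! i))) *\<^sub>R (V i - V (Suc i))"
    if "i < length js" for i
    using step[OF that] assms(2)[OF that] by simp
  moreover have "- w (aff_refl_prod g (\<lambda>j. - l j) js (- \<mu>)) = w (refl_prod g js \<mu>)
      + (\<Sum>i<length js. of_int (l (js ! i)) *\<^sub>R w (refl_prod g (take i js) (g (js ! i))))"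
    by (simp add: aff_refl_prod_eq r.neg w.diff w.neg w.sum w.scale sum_negf)
  ultimately show ?thesis
    by (simp add: V_def)
qed

section \<open>Abel summation at breakpoints\<close>

lemma sum_increments_above:
  fixes f :: "nat \<Rightarrow> 'a::ab_group_add"
  assumes "a0 \<le> t"
  shows "(\<Sum>a = 1..t. if a0 < a then f a - f (a - 1) else 0) = f t - f a0"
  using assms
proof (induction t)
  case 0
  then show ?case by simp
next
  case (Suc t)
  then show ?case
    by (cases "a0 = Suc t") (auto intro!: sum.neutral)
qed

lemma below_threshold_eq_lessThan:
  fixes D :: "nat \<Rightarrow> 'b::linorder"
  assumes "mono_on {..<p} D"
  shows "{i. i < p \<and> D i < x} = {..<card {i. i < p \<and> D i < x}}"
proof -
  have "\<exists>q. {i. i < p \<and> D i < x} = {..<q}"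
    using assms
  proof (induction p)
    case 0
    then show ?case by auto
  next
    case (Suc p)
    then obtain q where q: "{i. i < p \<and> D i < x} = {..<q}"
      using mono_on_subset[of "{..<Suc p}" D "{..<p}"] by auto
    show ?case
    proof (cases "D p < x")
      case True
      have "D i < x" if "i < p" for i
        using mono_onD[OF Suc.prems, of i p] that True by simp
      then have "{i. i < Suc p \<and> D i < x} = {..<Suc p}"
        using True by (auto simp: less_Suc_eq)
      then show ?thesis by blast
    next
      case False
      then have "{i. i < Suc p \<and> D i < x} = {i. i < p \<and> D i < x}"
        by (auto simp: less_Suc_eq)
      then show ?thesis using q by blast
    qed
  qed
  then obtain q where "{i. i < p \<and> D i < x} = {..<q}" ..
  then show ?thesis by simp
qed

lemma telescope_below_threshold:
  fixes D :: "nat \<Rightarrow> 'b::linorder" and V :: "nat \<Rightarrow> 'a::ab_group_add"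
  assumes "mono_on {..<p} D"
  shows "V (card {i. i < p \<and> D i < x}) = V 0 + (\<Sum>i<p. if D i < x then V (Suc i) - V i else 0)"
proof -
  have "(\<Sum>i<p. if D i < x then V (Suc i) - V i else 0) = (\<Sum>i\<in>{i. i < p \<and> D i < x}. V (Suc i) - V i)"
    by (simp add: sum.If_cases Collect_conj_eq lessThan_def Int_commute)
  also have "\<dots> = V (card {i. i < p \<and> D i < x}) - V 0"
    by (subst below_threshold_eq_lessThan[OF assms]) (rule sum_lessThan_telescope)
  finally show ?thesis by simp
qed

lemma abel_sum_at_breakpoints:
  fixes D c :: "nat \<Rightarrow> real" and V :: "nat \<Rightarrow> 'a::real_vector"
  assumes D_mono: "mono_on {..<p} D"
    and c_mono: "strict_mono_on {..t} c" and c0: "c 0 = 0" and ct: "c t = 1"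
    and D_in: "\<And>i. i < p \<Longrightarrow> D i \<in> c ` {..t}"
  shows "V p + (\<Sum>i<p. D i *\<^sub>R (V i - V (Suc i)))
    = (\<Sum>a = 1..t. (c a - c (a - 1)) *\<^sub>R V (card {i. i < p \<and> D i < c a}))"
proof -
  define \<delta> where "\<delta> i a = (if D i < c a then c a - c (a - 1) else 0)" for i a
  have weight: "(\<Sum>a = 1..t. \<delta> i a) = 1 - D i" if i: "i < p" for i
  proof -
    obtain a0 where a0: "a0 \<le> t" "D i = c a0"
      using D_in[OF i] by auto
    have "D i < c a \<longleftrightarrow> a0 < a" if "a \<le> t" for a
      using a0 that c_mono
      by (metis atMost_iff linorder_neqE_nat order.asym strict_mono_onD)
    then have "(\<Sum>a = 1..t. \<delta> i a) = (\<Sum>a = 1..t. if a0 < a then c a - c (a - 1) else 0)"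
      unfolding \<delta>_def by (intro sum.cong) auto
    then show ?thesis
      using sum_increments_above[OF a0(1), of c] a0 ct by simp
  qed
  have total: "(\<Sum>a = 1..t. c a - c (a - 1)) = 1"
  proof -
    have "(\<Sum>a = 1..t. c a - c (a - 1)) = (\<Sum>a = 1..t. if 0 < a then c a - c (a - 1) else 0)"
      by (rule sum.cong) auto
    then show ?thesis
      using sum_increments_above[of 0 t c] c0 ct by simp
  qed
  have "(\<Sum>a = 1..t. (c a - c (a - 1)) *\<^sub>R V (card {i. i < p \<and> D i < c a}))
      = (\<Sum>a = 1..t. (c a - c (a - 1)) *\<^sub>R V 0 + (\<Sum>i<p. \<delta> i a *\<^sub>R (V (Suc i) - V i)))"
    unfolding telescope_below_threshold[OF D_mono] \<delta>_def
    by (simp add: scaleR_add_right scaleR_sum_right) (auto intro!: sum.cong)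
  also have "\<dots> = V 0 + (\<Sum>i<p. (\<Sum>a = 1..t. \<delta> i a) *\<^sub>R (V (Suc i) - V i))"
    unfolding sum.distrib scaleR_sum_left[symmetric] total
    by (subst sum.swap) (simp add: scaleR_sum_left)
  also have "\<dots> = V 0 + (\<Sum>i<p. (1 - D i) *\<^sub>R (V (Suc i) - V i))"
    using weight by simp
  also have "\<dots> = V p + (\<Sum>i<p. D i *\<^sub>R (V i - V (Suc i)))"
    using sum_lessThan_telescope[of V p] by (simp add: algebra_simps sum.distrib sum_subtractf)
  finally show ?thesis ..
qed

lemma sorted_breakpoints:
  fixes S :: "real set"
  assumes fin: "finite S" and S01: "S \<subseteq> {0<..<1}"
  defines "cs \<equiv> sorted_list_of_set S"
  defines "t \<equiv> length cs + 1"
  defines "c \<equiv> \<lambda>a. if a = 0 then 0 else if a = t then 1 else cs ! (a - 1)"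
  shows "strict_mono_on {..t} c" and "c ` {..t} = insert 0 (insert 1 S)"
proof -
  have set_cs: "set cs = S" and sorted_cs: "sorted_wrt (<) cs"
    using fin by (simp_all add: cs_def)
  have c_inner: "c a = cs ! (a - 1)" "c a \<in> S" if "0 < a" "a < t" for a
    using that set_cs by (auto simp: c_def t_def)
  show "strict_mono_on {..t} c"
  proof (rule strict_mono_onI)
    fix a b :: nat
    assume ab: "a \<in> {..t}" "b \<in> {..t}" "a < b"
    consider "a = 0" | "0 < a" "b = t" | "0 < a" "b < t"
      using ab by fastforce
    then show "c a < c b"
    proof cases
      case 1
      then show ?thesis
        using ab c_inner[of b] S01 by (cases "b = t") (auto simp: c_def)
    next
      case 2
      then show ?thesis
        using ab c_inner[of a] S01 by (auto simp: c_def)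
    next
      case 3
      then show ?thesis
        using ab c_inner[of a] c_inner[of b] sorted_wrt_nth_less[OF sorted_cs]
        by (simp add: t_def)
    qed
  qed
  show "c ` {..t} = insert 0 (insert 1 S)"
  proof
    show "c ` {..t} \<subseteq> insert 0 (insert 1 S)"
      using c_inner by (auto simp: c_def)
    have "0 = c 0" "1 = c t"
      by (simp_all add: c_def t_def)
    moreover have "x \<in> c ` {..t}" if "x \<in> S" for x
    proof -
      obtain j where "j < length cs" "x = cs ! j"
        using \<open>x \<in> S\<close> set_cs by (metis in_set_conv_nth)
      then show ?thesis
        by (intro image_eqI[of _ _ "Suc j"]) (auto simp: c_def t_def)
    qed
    ultimately show "insert 0 (insert 1 S) \<subseteq> c ` {..t}"
      by auto
  qed
qed

section \<open>The ordered set of inversions\<close>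

lemma ex1_sorted_wrt_list:
  assumes fin: "finite S"
    and irrefl: "irreflp_on S r" and trans: "transp_on S r" and total: "totalp_on S r"
  shows "\<exists>!xs. distinct xs \<and> set xs = S \<and> sorted_wrt r xs"
proof -
  define rk where "rk x = card {z \<in> S. r z x}" for x
  have rk_less: "rk x < rk y" if "x \<in> S" "y \<in> S" "r x y" for x y
  proof -
    have "{z \<in> S. r z x} \<subset> {z \<in> S. r z y}"
      using that transp_onD[OF trans] irreflp_onD[OF irrefl] by blast
    then show ?thesis
      unfolding rk_def using fin by (intro psubset_card_mono) auto
  qed
  have r_iff: "r x y \<longleftrightarrow> rk x < rk y" if "x \<in> S" "y \<in> S" for x y
    using rk_less[OF that] rk_less[OF that(2,1)] totalp_onD[OF total that] by force
  have inj: "inj_on rk S"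
    using r_iff totalp_onD[OF total] by (metis inj_onI less_irrefl)
  have sorted_iff: "sorted_wrt r xs \<longleftrightarrow> sorted_wrt (<) (map rk xs)" if "set xs = S" for xs
    unfolding sorted_wrt_map
    using sorted_wrt_mono_rel[of xs r "\<lambda>x y. rk x < rk y"]
      sorted_wrt_mono_rel[of xs "\<lambda>x y. rk x < rk y" r] r_iff that
    by blast
  obtain ys where ys: "set ys = S" "distinct ys"
    using finite_distinct_list[OF fin] by blast
  define xs where "xs = sort_key rk ys"
  have xs: "set xs = S" "distinct xs"
    using ys by (simp_all add: xs_def)
  then have "sorted_wrt (<) (map rk xs)"
    using inj by (simp add: strict_sorted_iff distinct_map xs_def)
  then have sorted_xs: "distinct xs \<and> set xs = S \<and> sorted_wrt r xs"
    using xs sorted_iff by blast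
  show ?thesis
  proof (rule ex1I[of _ xs])
    fix zs
    assume zs: "distinct zs \<and> set zs = S \<and> sorted_wrt r zs"
    then have "map rk zs = map rk xs"
      using sorted_xs sorted_iff by (intro strict_sorted_equal) auto
    then show "zs = xs"
      using inj zs xs by (intro map_inj_on[of rk]) auto
  qed (rule sorted_xs)
qed

lemma Inv_memD:
  assumes "(\<gamma>, k) \<in> Inv \<Delta> \<Delta>p \<mu>"
  shows "\<gamma> \<in> \<Delta>" and "0 < coroot_pair \<mu> \<gamma>" and "0 \<le> k" and "of_int k \<le> coroot_pair \<mu> \<gamma>"
  using assms by (auto simp: Inv_def aff_pos_def not_less)

lemma dval_Inv:
  assumes "b \<in> Inv \<Delta> \<Delta>p \<mu>"
  shows "0 \<le> dval \<mu> b" and "dval \<mu> b \<le> 1"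
  using Inv_memD[of "fst b" "snd b" \<Delta> \<Delta>p \<mu>] assms by (simp_all add: dval_def)

lemma finite_Inv:
  assumes "finite \<Delta>"
  shows "finite (Inv \<Delta> \<Delta>p \<mu>)"
proof -
  have "(\<gamma>, k) \<in> Sigma \<Delta> (\<lambda>\<gamma>. {0..\<lfloor>coroot_pair \<mu> \<gamma>\<rfloor>})" if "(\<gamma>, k) \<in> Inv \<Delta> \<Delta>p \<mu>" for \<gamma> k
    using Inv_memD[OF that] by (simp add: le_floor_iff)
  then have "Inv \<Delta> \<Delta>p \<mu> \<subseteq> Sigma \<Delta> (\<lambda>\<gamma>. {0..\<lfloor>coroot_pair \<mu> \<gamma>\<rfloor>})"
    by fast
  then show ?thesis
    using assms by (rule finite_subset[OF _ finite_SigmaI]) auto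
qed

lemma uminus_root_positive:
  assumes "root_system \<Delta>" and "positive_system \<Delta> \<Delta>p" and "\<gamma> \<in> \<Delta>" and "\<gamma> \<notin> \<Delta>p"
  shows "- \<gamma> \<in> \<Delta>p"
proof -
  have "refl \<gamma> \<gamma> \<in> \<Delta>" and "\<gamma> \<noteq> 0"
    using assms(1,3) unfolding root_system_def by auto
  then have "- \<gamma> \<in> \<Delta>"
    by (simp add: refl_self)
  obtain f where "\<forall>\<alpha>\<in>\<Delta>. inner f \<alpha> \<noteq> 0" and \<Delta>p: "\<Delta>p = {\<alpha>\<in>\<Delta>. 0 < inner f \<alpha>}"
    using assms(2) unfolding positive_system_def by blast
  then have "inner f \<gamma> < 0"
    using assms(3,4) by (metis (mono_tags, lifting) linorder_neqE_linordered_idom mem_Collect_eq)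
  then show ?thesis
    using \<open>- \<gamma> \<in> \<Delta>\<close> by (simp add: \<Delta>p)
qed

context
  fixes \<Delta> \<Delta>p :: "'a::real_inner set" and R :: "'a \<Rightarrow> 'a \<Rightarrow> bool"
  assumes ro: "reflection_order \<Delta>p R"
    and uminus_pos: "\<And>\<gamma>. \<gamma> \<in> \<Delta> \<Longrightarrow> \<gamma> \<notin> \<Delta>p \<Longrightarrow> - \<gamma> \<in> \<Delta>p"
begin

lemma prec_strict_total_order:
  "irreflp_on \<Delta> (prec \<Delta>p R)" "transp_on \<Delta> (prec \<Delta>p R)" "totalp_on \<Delta> (prec \<Delta>p R)"
proof -
  have irrefl: "irreflp_on \<Delta>p R" and trans: "transp_on \<Delta>p R" and total: "totalp_on \<Delta>p R"
    using ro unfolding reflection_order_def irreflp_on_def transp_on_def totalp_on_def by blast+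
  show "irreflp_on \<Delta> (prec \<Delta>p R)"
    using uminus_pos irreflp_onD[OF irrefl] by (auto simp: irreflp_on_def prec_def)
  show "transp_on \<Delta> (prec \<Delta>p R)"
    using uminus_pos transp_onD[OF trans] unfolding transp_on_def prec_def by blast
  show "totalp_on \<Delta> (prec \<Delta>p R)"
  proof (rule totalp_onI)
    fix x y
    assume "x \<in> \<Delta>" "y \<in> \<Delta>" "x \<noteq> y"
    then show "prec \<Delta>p R x y \<or> prec \<Delta>p R y x"
      using uminus_pos totalp_onD[OF total, of x y] totalp_onD[OF total, of "- x" "- y"]
      unfolding prec_def by auto
  qed
qed

lemma inv_less_strict_total_order:
  "irreflp_on (Inv \<Delta> \<Delta>p \<mu>) (inv_less \<Delta>p R \<mu>)"
  "transp_on (Inv \<Delta> \<Delta>p \<mu>) (inv_less \<Delta>p R \<mu>)"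
  "totalp_on (Inv \<Delta> \<Delta>p \<mu>) (inv_less \<Delta>p R \<mu>)"
proof -
  have fst_Inv: "fst b \<in> \<Delta>" if "b \<in> Inv \<Delta> \<Delta>p \<mu>" for b
    using Inv_memD(1)[of "fst b" "snd b" \<Delta> \<Delta>p \<mu>] that by simp
  show "irreflp_on (Inv \<Delta> \<Delta>p \<mu>) (inv_less \<Delta>p R \<mu>)"
    using fst_Inv irreflp_onD[OF prec_strict_total_order(1)]
    by (auto simp: irreflp_on_def inv_less_def)
  show "transp_on (Inv \<Delta> \<Delta>p \<mu>) (inv_less \<Delta>p R \<mu>)"
  proof (rule transp_onI)
    fix x y z
    assume "x \<in> Inv \<Delta> \<Delta>p \<mu>" "y \<in> Inv \<Delta> \<Delta>p \<mu>" "z \<in> Inv \<Delta> \<Delta>p \<mu>"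
      and "inv_less \<Delta>p R \<mu> x y" "inv_less \<Delta>p R \<mu> y z"
    then show "inv_less \<Delta>p R \<mu> x z"
      using fst_Inv transp_onD[OF prec_strict_total_order(2), of "fst z" "fst y" "fst x"]
      unfolding inv_less_def by auto
  qed
  show "totalp_on (Inv \<Delta> \<Delta>p \<mu>) (inv_less \<Delta>p R \<mu>)"
  proof (rule totalp_onI)
    fix x y
    assume xy: "x \<in> Inv \<Delta> \<Delta>p \<mu>" "y \<in> Inv \<Delta> \<Delta>p \<mu>" "x \<noteq> y"
    show "inv_less \<Delta>p R \<mu> x y \<or> inv_less \<Delta>p R \<mu> y x"
    proof (cases "dval \<mu> x = dval \<mu> y")
      case True
      have "fst x \<noteq> fst y"
      proof
        assume "fst x = fst y"
        moreover have "coroot_pair \<mu> (fst x) \<noteq> 0"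
          using Inv_memD(2)[of "fst x" "snd x" \<Delta> \<Delta>p \<mu>] xy by simp
        ultimately have "snd x = snd y"
          using True by (simp add: dval_def)
        with \<open>fst x = fst y\<close> xy show False
          by (simp add: prod_eq_iff)
      qed
      then show ?thesis
        using True totalp_onD[OF prec_strict_total_order(3)] fst_Inv xy
        by (auto simp: inv_less_def)
    qed (auto simp: inv_less_def)
  qed
qed

end

lemma inv_list:
  assumes "root_system \<Delta>" and "positive_system \<Delta> \<Delta>p" and "reflection_order \<Delta>p R"
  shows "distinct (inv_list \<Delta> \<Delta>p R \<mu>)" and "set (inv_list \<Delta> \<Delta>p R \<mu>) = Inv \<Delta> \<Delta>p \<mu>"
    and "sorted_wrt (inv_less \<Delta>p R \<mu>) (inv_list \<Delta> \<Delta>p R \<mu>)"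
proof -
  note order = inv_less_strict_total_order[OF assms(3) uminus_root_positive[OF assms(1,2)]]
  have "finite (Inv \<Delta> \<Delta>p \<mu>)"
    using assms(1) by (intro finite_Inv) (simp add: root_system_def)
  from theI'[OF ex1_sorted_wrt_list[OF this order]]
  show "distinct (inv_list \<Delta> \<Delta>p R \<mu>)" and "set (inv_list \<Delta> \<Delta>p R \<mu>) = Inv \<Delta> \<Delta>p \<mu>"
    and "sorted_wrt (inv_less \<Delta>p R \<mu>) (inv_list \<Delta> \<Delta>p R \<mu>)"
    unfolding inv_list_def by auto
qed

section \<open>The two weights\<close>

lemma admissible_selection:
  assumes "root_system \<Delta>" and "positive_system \<Delta> \<Delta>p" and "reflection_order \<Delta>p R"
    and "A \<in> admissible \<Delta> \<Delta>p R \<mu> w"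
  defines "L \<equiv> inv_list \<Delta> \<Delta>p R \<mu>" and "js \<equiv> sorted_list_of_set A"
  shows "\<And>i. i < length js \<Longrightarrow> L ! (js ! i - 1) \<in> Inv \<Delta> \<Delta>p \<mu>"
    and "mono_on {..<length js} (\<lambda>i. dval \<mu> (L ! (js ! i - 1)))"
proof -
  have A: "A \<subseteq> {1..length L}"
    using assms(4) by (simp add: admissible_def L_def Let_def)
  then have "finite A"
    by (rule finite_subset) simp
  then have js: "sorted_wrt (<) js" "set js = A"
    by (simp_all add: js_def)
  have index: "1 \<le> js ! i" "js ! i - 1 < length L" if "i < length js" for i
  proof -
    have "js ! i \<in> {1..length L}"
      using A js(2) nth_mem[OF that] by blast
    then show "1 \<le> js ! i" "js ! i - 1 < length L"
      by auto
  qed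
  note L = inv_list[OF assms(1-3), of \<mu>, folded L_def]
  show "L ! (js ! i - 1) \<in> Inv \<Delta> \<Delta>p \<mu>" if "i < length js" for i
    using index(2)[OF that] L(2) nth_mem by blast
  show "mono_on {..<length js} (\<lambda>i. dval \<mu> (L ! (js ! i - 1)))"
  proof (rule mono_onI)
    fix i j :: nat
    assume ij: "i \<in> {..<length js}" "j \<in> {..<length js}" "i \<le> j"
    show "dval \<mu> (L ! (js ! i - 1)) \<le> dval \<mu> (L ! (js ! j - 1))"
    proof (cases "i = j")
      case False
      then have "js ! i < js ! j"
        using ij sorted_wrt_nth_less[OF js(1)] by simp
      then have "inv_less \<Delta>p R \<mu> (L ! (js ! i - 1)) (L ! (js ! j - 1))"
        using ij index[of i] index[of j] by (intro sorted_wrt_nth_less[OF L(3)]) auto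
      then show ?thesis
        by (auto simp: inv_less_def)
    qed simp
  qed
qed

lemma wt_adm_eq_abel_sum:
  assumes "root_system \<Delta>" and "positive_system \<Delta> \<Delta>p" and "reflection_order \<Delta>p R"
    and "w \<in> weyl_group \<Delta>" and "A \<in> admissible \<Delta> \<Delta>p R \<mu> w"
  defines "L \<equiv> inv_list \<Delta> \<Delta>p R \<mu>" and "js \<equiv> sorted_list_of_set A"
  defines "D \<equiv> \<lambda>i. dval \<mu> (L ! (js ! i - 1))" and "V \<equiv> \<lambda>q. u_seq \<Delta>p L w js q \<mu>"
  shows "wt_adm \<Delta> \<Delta>p R \<mu> w A = V (length js) + (\<Sum>i<length js. D i *\<^sub>R (V i - V (Suc i)))"
proof -
  define g where "g j = fst (L ! (j - 1))" for j
  define l where "l j = snd (L ! (j - 1))" for j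
  have "wt_adm \<Delta> \<Delta>p R \<mu> w A = - w (aff_refl_prod g (\<lambda>j. - l j) js (- \<mu>))"
    by (simp add: wt_adm_def Let_def aff_refl_prod_def g_def l_def L_def js_def)
  moreover have "V q = w (refl_prod g (take q js) \<mu>)" for q
    by (simp add: V_def u_seq_def refl_prod_def g_def refl_absr)
  moreover have "D i = of_int (l (js ! i)) / coroot_pair \<mu> (g (js ! i))" for i
    by (simp add: D_def dval_def g_def l_def)
  moreover have "coroot_pair \<mu> (g (js ! i)) \<noteq> 0" if "i < length js" for i
    using admissible_selection(1)[OF assms(1-3,5), of i, folded L_def js_def] that
      Inv_memD(2)[of "g (js ! i)" "l (js ! i)" \<Delta> \<Delta>p \<mu>]
    by (simp add: g_def l_def)
  ultimately show ?thesis
    using aff_refl_prod_as_abel_sum[OF weyl_group_linear[OF assms(4)]] by simp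
qed

lemma wt_path_reversed:
  fixes U :: "nat \<Rightarrow> 'a::real_vector \<Rightarrow> 'a"
  shows "wt_path \<mu> (map (\<lambda>i. U (t + 1 - i)) [1..<t + 1], ys, map (\<lambda>i. 1 - c (t - i)) [0..<t + 1])
    = (\<Sum>a = 1..t. (c a - c (a - 1)) *\<^sub>R U a \<mu>)"
proof -
  have "wt_path \<mu> (map (\<lambda>i. U (t + 1 - i)) [1..<t + 1], ys, map (\<lambda>i. 1 - c (t - i)) [0..<t + 1])
      = (\<Sum>k = 1..t. (c (t + 1 - k) - c (t + 1 - k - 1)) *\<^sub>R U (t + 1 - k) \<mu>)"
    unfolding wt_path_def prod.case length_map length_upt
    by (intro sum.cong) (auto simp: Suc_diff_le nth_map_upt simp del: upt_Suc)
  also have "\<dots> = (\<Sum>a = 1..t. (c a - c (a - 1)) *\<^sub>R U a \<mu>)"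
    by (rule sum.reindex_bij_witness[where i="\<lambda>a. t + 1 - a" and j="\<lambda>a. t + 1 - a"]) auto
  finally show ?thesis .
qed

lemma wt_path_Xi:
  fixes \<Delta> \<Delta>p :: "'a::euclidean_space set" and R :: "'a \<Rightarrow> 'a \<Rightarrow> bool" and \<mu> :: 'a
    and w :: "'a \<Rightarrow> 'a" and A :: "nat set"
  defines "L \<equiv> inv_list \<Delta> \<Delta>p R \<mu>" and "js \<equiv> sorted_list_of_set A"
  defines "D \<equiv> \<lambda>i. dval \<mu> (L ! (js ! i - 1))"
  defines "cs \<equiv> sorted_list_of_set {D i | i. i < length js \<and> 0 < D i \<and> D i < 1}"
  defines "t \<equiv> length cs + 1"
  defines "c \<equiv> \<lambda>a. if a = 0 then 0 else if a = t then 1 else cs ! (a - 1)"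
  shows "wt_path \<mu> (Xi \<Delta> \<Delta>p R \<mu> w A)
    = (\<Sum>a = 1..t. (c a - c (a - 1)) *\<^sub>R u_seq \<Delta>p L w js (card {i. i < length js \<and> D i < c a}) \<mu>)"
proof -
  have D_eq: "dval \<mu> (L ! (js ! i - 1)) = D i" for i
    by (simp add: D_def)
  have c_eq: "(if a = 0 then 0 else if a = t then 1 else cs ! (a - 1)) = c a" for a
    by (simp add: c_def)
  \<comment> \<open>\<open>Xi\<close> numbers the selected roots from 1.\<close>
  have set_eq: "{D (b - 1) | b. b \<in> {1..length js} \<and> 0 < D (b - 1) \<and> D (b - 1) < 1}
      = {D i | i. i < length js \<and> 0 < D i \<and> D i < 1}"
    by (auto 0 3 intro: exI[of _ "Suc i" for i] exI[of _ "b - 1" for b])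
  have card_eq: "card {b \<in> {1..length js}. D (b - 1) < x} = card {i. i < length js \<and> D i < x}" for x
  proof -
    have "{b \<in> {1..length js}. D (b - 1) < x} = Suc ` {i. i < length js \<and> D i < x}"
      by (auto simp: image_iff gr0_conv_Suc Suc_le_eq)
    then show ?thesis
      by (simp add: card_image)
  qed
  define U where "U a = u_seq \<Delta>p L w js (card {i. i < length js \<and> D i < c a})" for a
  have "fst (Xi \<Delta> \<Delta>p R \<mu> w A) = map (\<lambda>i. U (t + 1 - i)) [1..<t + 1]"
    and "snd (snd (Xi \<Delta> \<Delta>p R \<mu> w A)) = map (\<lambda>i. 1 - c (t - i)) [0..<t + 1]"
    unfolding Xi_def Let_def L_def[symmetric] js_def[symmetric] D_eq set_eq cs_def[symmetric]
      t_def[symmetric] c_eq card_eq U_def fst_conv snd_conv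
    by (rule refl)+
  then obtain ys where "Xi \<Delta> \<Delta>p R \<mu> w A
      = (map (\<lambda>i. U (t + 1 - i)) [1..<t + 1], ys, map (\<lambda>i. 1 - c (t - i)) [0..<t + 1])"
    by (metis prod.collapse)
  then show ?thesis
    by (simp only: wt_path_reversed[of \<mu> U t ys c]) (simp add: U_def)
qed

theorem proposition5p10:
  fixes \<Delta> \<Delta>p :: "'a::euclidean_space set"
    and \<mu> :: 'a and R :: "'a \<Rightarrow> 'a \<Rightarrow> bool" and w :: "'a \<Rightarrow> 'a" and A :: "nat set"
  assumes "root_system \<Delta>" and "irreducible_rs \<Delta>" and "positive_system \<Delta> \<Delta>p"
    and "\<mu> \<in> weight_lattice \<Delta>"
    and "R \<in> RO \<mu> \<Delta>p"
    and "w \<in> weyl_group \<Delta>"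
    and "A \<in> admissible \<Delta> \<Delta>p R \<mu> w"
  shows "wt_adm \<Delta> \<Delta>p R \<mu> w A = wt_path \<mu> (Xi \<Delta> \<Delta>p R \<mu> w A)"
proof -
  have ro: "reflection_order \<Delta>p R"
    using assms(5) by (simp add: RO_def)
  define L where "L = inv_list \<Delta> \<Delta>p R \<mu>"
  define js where "js = sorted_list_of_set A"
  define D where "D = (\<lambda>i. dval \<mu> (L ! (js ! i - 1)))"
  define V where "V = (\<lambda>q. u_seq \<Delta>p L w js q \<mu>)"
  define S where "S = {D i | i. i < length js \<and> 0 < D i \<and> D i < 1}"
  define t where "t = length (sorted_list_of_set S) + 1"
  define c where "c = (\<lambda>a. if a = 0 then 0 else if a = t then 1 else sorted_list_of_set S ! (a - 1))"
  note selection = admissible_selection[OF assms(1,3) ro assms(7), folded L_def js_def, folded D_def]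
  have "finite S" and "S \<subseteq> {0<..<1}"
    by (auto simp: S_def)
  from sorted_breakpoints[OF this]
  have c_mono: "strict_mono_on {..t} c" and c_image: "c ` {..t} = insert 0 (insert 1 S)"
    unfolding t_def c_def .
  have D_in: "D i \<in> c ` {..t}" if "i < length js" for i
    using dval_Inv[OF selection(1)[OF that]] that unfolding c_image
    by (auto simp: S_def D_def)
  have "wt_adm \<Delta> \<Delta>p R \<mu> w A = V (length js) + (\<Sum>i<length js. D i *\<^sub>R (V i - V (Suc i)))"
    unfolding V_def D_def L_def js_def using assms(1,3) ro assms(6,7) by (rule wt_adm_eq_abel_sum)
  also have "\<dots> = (\<Sum>a = 1..t. (c a - c (a - 1)) *\<^sub>R V (card {i. i < length js \<and> D i < c a}))"
    by (rule abel_sum_at_breakpoints[OF selection(2) c_mono _ _ D_in]) (simp_all add: c_def t_def)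
  also have "\<dots> = wt_path \<mu> (Xi \<Delta> \<Delta>p R \<mu> w A)"
    unfolding wt_path_Xi V_def c_def t_def S_def D_def js_def L_def ..
  finally show ?thesis .
qed

end
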